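(* Let $\hat{a}\in\mathbb{C}$, $\hat{a}\neq 0$, and $\hat{d}\in\mathbb{Z}$, $\hat{d}\geq 0$. Let $F_0,F_1$ be causal filters, not both zero, with $\gcd(F_0,F_1)=z^{-d_F}$ where $0\leq d_F\leq\hat{d}$, and let $M\in\mathbb{Z}$ satisfy $0\leq M\leq \hat{d}-d_F$. Suppose $(E_0,E_1)$ is a causal complement to $(F_0,F_1)$ for $\hat{a}z^{-\hat{d}}$, i.e. $F_0E_1-F_1E_0=\hat{a}z^{-\hat{d}}$. Define $\widetilde{F}_j(z)=z^{d_F}F_j(z)$, $j=0,1$ (which are causal), and let $\ell\in\{0,1\}$ be an index for which $\widetilde{F}_\ell$ is left-justified. Then there exists a unique causal filter $S(z)$ such that the pair $(R_0,R_1)=(E_0-S\widetilde{F}_0,\;E_1-S\widetilde{F}_1)$ is a causal complement to $(F_0,F_1)$ for $\hat{a}z^{-\hat{d}}$ that is degree-reducing modulo $M$ in $F_\ell$; moreover this $(R_0,R_1)$ is the unique causal complement to $(F_0,F_1)$ for $\hat{a}z^{-\hat{d}}$ that is degree-reducing modulo $M$ in $F_\ell$.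
   Context: A causal filter is a polynomial in $z^{-1}$ with complex coefficients; $\deg$ denotes degree in $z^{-1}$ ($\deg 0=-\infty$); gcd and divisibility are in $\mathbb{C}[z^{-1}]$ (up to nonzero constants). A causal filter $F$ is left-justified if $z^{-1}\nmid F$, i.e. its constant term $f(0)$ is nonzero. An ordered pair $(R_0,R_1)$ of causal filters is a causal complement to $(F_0,F_1)$ for inhomogeneity $\hat{a}z^{-\hat{d}}$ if $F_0R_1-F_1R_0=\hat{a}z^{-\hat{d}}$. It is degree-reducing modulo $M$ in $F_\ell$ ($\ell\in\{0,1\}$) if $z^{-M}$ divides both $R_0$ and $R_1$ and $\deg(R_\ell)<\deg(F_\ell)-\deg\gcd(F_0,F_1)+M$. *)

theory Defs
  imports "HOL-Computational_Algebra.Polynomial_Factorial" "HOL-Computational_Algebra.Field_as_Ring" Complex_Main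
begin

text \<open>A causal filter is modelled as a polynomial in the variable w = z^{-1},
  i.e. an element of complex poly; z^{-k} is monom 1 k.\<close>

type_synonym filter = "complex poly"

definition left_justified :: "filter \<Rightarrow> bool" where
  "left_justified F \<longleftrightarrow> \<not> (monom 1 1 dvd F)"

definition causal_complement ::
  "filter \<Rightarrow> filter \<Rightarrow> complex \<Rightarrow> nat \<Rightarrow> filter \<Rightarrow> filter \<Rightarrow> bool" where
  "causal_complement F0 F1 a d R0 R1 \<longleftrightarrow> F0 * R1 - F1 * R0 = monom a d"

text \<open>Degree-reducing modulo M in F_l (l = 0 or 1), with the convention deg 0 = -infinity:
  the inequality deg R_l < deg F_l - deg gcd(F0,F1) + M holds trivially when R_l = 0
  and F_l \<noteq> 0, and fails when F_l = 0 (right-hand side is -infinity).\<close>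

definition deg_reducing ::
  "nat \<Rightarrow> nat \<Rightarrow> filter \<Rightarrow> filter \<Rightarrow> filter \<Rightarrow> filter \<Rightarrow> bool" where
  "deg_reducing M l F0 F1 R0 R1 \<longleftrightarrow>
     monom 1 M dvd R0 \<and> monom 1 M dvd R1 \<and>
     (let R = (if l = 0 then R0 else R1); F = (if l = 0 then F0 else F1) in
        F \<noteq> 0 \<and> (R = 0 \<or> int (degree R) < int (degree F) - int (degree (gcd F0 F1)) + int M))"

end

theory Submission
  imports Defs
begin

text \<open>Write w = z^{-1} and G_j = F_j div w^dF. Cancelling the common factor w^dF, the
  complements of (F0, F1) are the solutions of G0 R1 - G1 R0 = a w^(d - dF) with G0, G1
  coprime, namely the pairs (E0 - S G0, E1 - S G1). If G_l is left-justified then w^M is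
  invertible modulo G_l, so S can be chosen with R_l = w^M (Q mod G_l) for a suitable Q;
  w^M then divides the other component by the equation. Two such reduced solutions
  differ in their l-th component by T G_l with w^M dividing T, which by degree counting
  forces T = 0.\<close>

lemma coprime_monom_if_left_justified:
  fixes G :: filter
  assumes "left_justified G"
  shows "coprime (monom 1 M) G"
proof -
  have X: "monom (1::complex) 1 = [:0, 1:]" by (simp add: monom_altdef)
  have "prime_elem [:0, 1::complex:]" by (rule prime_elem_linear_field_poly) simp
  then have "coprime [:0, 1::complex:] G"
    using assms X prime_elem_imp_coprime unfolding left_justified_def by metis
  moreover have "monom (1::complex) M = [:0, 1:] ^ M" by (simp add: monom_altdef)
  ultimately show ?thesis by simp
qed

lemma reduced_solution_exists:
  fixes G H E E' :: filter
  assumes "left_justified G" and "M \<le> k" and eq: "G * E' - H * E = monom c k"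
  shows "\<exists>S. monom 1 M dvd E - S * G \<and> monom 1 M dvd E' - S * H \<and>
             (E - S * G = 0 \<or> degree (E - S * G) < degree G + M)"
proof -
  have G0: "G \<noteq> 0" using assms(1) by (auto simp: left_justified_def)
  have cop: "coprime (monom 1 M) G" using assms(1) by (rule coprime_monom_if_left_justified)
  then obtain u v where uv: "u * monom 1 M + v * G = 1"
    using bezout_coefficients_fst_snd[of "monom 1 M" G] by (metis coprime_iff_gcd_eq_1)
  define D Q where "D = (u * E) div G" and "Q = (u * E) mod G"
  define S where "S = E * v + monom 1 M * D"
  have R: "E - S * G = monom 1 M * Q"
  proof -
    have "E = E * (u * monom 1 M + v * G)" using uv by simp
    also have "\<dots> = monom 1 M * (D * G + Q) + E * v * G"
      unfolding D_def Q_def by (simp add: algebra_simps)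
    also have "\<dots> = monom 1 M * Q + S * G" unfolding S_def by (simp add: algebra_simps)
    finally show ?thesis by simp
  qed
  then have dvdR: "monom 1 M dvd E - S * G" by simp
  have "E - S * G = 0 \<or> degree (E - S * G) < degree G + M"
    using R degree_mod_less[OF G0, of "u * E"] unfolding Q_def[symmetric]
    by (cases "Q = 0") (auto simp: degree_mult_eq degree_monom_eq)
  moreover have "monom 1 M dvd E' - S * H"
  proof -
    have "monom c k = monom 1 M * monom c (k - M)" using \<open>M \<le> k\<close> by (simp add: mult_monom)
    moreover have "G * (E' - S * H) = monom c k + H * (E - S * G)"
      using eq by (simp add: algebra_simps)
    ultimately have "monom 1 M dvd G * (E' - S * H)"
      using dvdR by (metis dvd_add dvd_mult dvd_triv_left)
    then show ?thesis using cop by (simp add: coprime_dvd_mult_right_iff)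
  qed
  ultimately show ?thesis using dvdR by blast
qed

lemma reduced_solution_unique:
  fixes G H R R' Q Q' :: filter
  assumes "coprime G H" and "left_justified G"
    and eq: "G * R' - H * R = G * Q' - H * Q"
    and "monom 1 M dvd R" and "R = 0 \<or> degree R < degree G + M"
    and "monom 1 M dvd Q" and "Q = 0 \<or> degree Q < degree G + M"
  shows "R = Q \<and> R' = Q'"
proof -
  have G0: "G \<noteq> 0" using assms(2) by (auto simp: left_justified_def)
  have "G * (R' - Q') = H * (R - Q)" using eq by (simp add: algebra_simps)
  then have "G dvd H * (R - Q)" by (metis dvd_triv_left)
  then obtain T where T: "R - Q = G * T"
    using \<open>coprime G H\<close> by (auto simp: coprime_dvd_mult_right_iff)
  have "R = Q"
  proof (rule ccontr)
    assume "R \<noteq> Q"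
    then have "T \<noteq> 0" using T by auto
    have "monom 1 M dvd G * T" using T assms(4,6) by (metis dvd_diff)
    then have "monom 1 M dvd T"
      using coprime_monom_if_left_justified[OF assms(2)] by (simp add: coprime_dvd_mult_right_iff)
    then have "M \<le> degree T"
      using dvd_imp_degree_le[OF _ \<open>T \<noteq> 0\<close>, of "monom 1 M"] by (simp add: degree_monom_eq)
    then have "degree G + M \<le> degree (R - Q)" using T G0 \<open>T \<noteq> 0\<close> by (simp add: degree_mult_eq)
    moreover have "degree (R - Q) \<le> max (degree R) (degree Q)" by (rule degree_diff_le_max)
    ultimately show False using assms(5,7) \<open>R \<noteq> Q\<close> by auto
  qed
  then show ?thesis using eq G0 by simp
qed

lemma causal_complement_swap:
  "causal_complement F0 F1 (- a) d R0 R1 \<longleftrightarrow> causal_complement F1 F0 a d R1 R0"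
proof -
  have "F0 * R1 - F1 * R0 = - (F1 * R0 - F0 * R1)" by simp
  then show ?thesis unfolding causal_complement_def by (metis minus_monom neg_equal_iff_equal)
qed

lemma deg_reducing_swap: "deg_reducing M 1 F0 F1 R0 R1 \<longleftrightarrow> deg_reducing M 0 F1 F0 R1 R0"
  by (auto simp: deg_reducing_def gcd.commute)

lemma causal_complement_cancel_gcd:
  assumes "gcd F0 F1 = monom 1 dF" and "dF \<le> d"
  shows "causal_complement F0 F1 a d R0 R1 \<longleftrightarrow>
         F0 div monom 1 dF * R1 - F1 div monom 1 dF * R0 = monom a (d - dF)"
proof -
  obtain G0 G1 where F: "F0 = monom 1 dF * G0" "F1 = monom 1 dF * G1"
    using assms(1) gcd_dvd1[of F0 F1] gcd_dvd2[of F0 F1] by (metis dvdE)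
  have "F0 * R1 - F1 * R0 = monom 1 dF * (G0 * R1 - G1 * R0)"
    unfolding F by (simp add: algebra_simps)
  moreover have "monom a d = monom 1 dF * monom a (d - dF)" using assms(2) by (simp add: mult_monom)
  ultimately show ?thesis unfolding causal_complement_def F by simp
qed

lemma deg_reducing_0_iff:
  assumes "gcd F0 F1 = monom 1 dF" and "F0 div monom 1 dF \<noteq> 0"
  shows "deg_reducing M 0 F0 F1 R0 R1 \<longleftrightarrow>
         monom 1 M dvd R0 \<and> monom 1 M dvd R1 \<and>
         (R0 = 0 \<or> degree R0 < degree (F0 div monom 1 dF) + M)"
proof -
  obtain G0 where F0: "F0 = monom 1 dF * G0"
    using assms(1) gcd_dvd1[of F0 F1] by (metis dvdE)
  then have "G0 \<noteq> 0" "F0 \<noteq> 0" "degree F0 = dF + degree G0"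
    using assms(2) by (auto simp: degree_mult_eq degree_monom_eq)
  then show ?thesis using assms(1) F0 by (auto simp: deg_reducing_def degree_monom_eq)
qed

lemma reduced_complement_exists_unique:
  fixes a :: complex and d dF M :: nat and F0 F1 E0 E1 :: filter
  assumes "gcd F0 F1 = monom 1 dF" and "dF \<le> d" and "M \<le> d - dF"
    and "causal_complement F0 F1 a d E0 E1"
    and "left_justified (F0 div monom 1 dF)"
  shows "\<exists>S. causal_complement F0 F1 a d (E0 - S * (F0 div monom 1 dF)) (E1 - S * (F1 div monom 1 dF))
            \<and> deg_reducing M 0 F0 F1 (E0 - S * (F0 div monom 1 dF)) (E1 - S * (F1 div monom 1 dF))
            \<and> (\<forall>S'. causal_complement F0 F1 a d (E0 - S' * (F0 div monom 1 dF)) (E1 - S' * (F1 div monom 1 dF))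
                   \<and> deg_reducing M 0 F0 F1 (E0 - S' * (F0 div monom 1 dF)) (E1 - S' * (F1 div monom 1 dF))
                   \<longrightarrow> S' = S)
            \<and> (\<forall>R0 R1. causal_complement F0 F1 a d R0 R1 \<and> deg_reducing M 0 F0 F1 R0 R1
                   \<longrightarrow> R0 = E0 - S * (F0 div monom 1 dF) \<and> R1 = E1 - S * (F1 div monom 1 dF))"
proof -
  define G0 G1 where "G0 = F0 div monom 1 dF" and "G1 = F1 div monom 1 dF"
  have "G0 \<noteq> 0" using assms(5) unfolding G0_def left_justified_def by auto
  then have "F0 \<noteq> 0" unfolding G0_def by auto
  then have cop: "coprime G0 G1" using div_gcd_coprime[of F0 F1] assms(1) G0_def G1_def by simp
  have cc: "causal_complement F0 F1 a d R0 R1 \<longleftrightarrow> G0 * R1 - G1 * R0 = monom a (d - dF)" for R0 R1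
    unfolding G0_def G1_def using assms(1,2) by (rule causal_complement_cancel_gcd)
  have dr: "deg_reducing M 0 F0 F1 R0 R1 \<longleftrightarrow>
      monom 1 M dvd R0 \<and> monom 1 M dvd R1 \<and> (R0 = 0 \<or> degree R0 < degree G0 + M)" for R0 R1
    unfolding G0_def using assms(1) \<open>G0 \<noteq> 0\<close>[unfolded G0_def] by (rule deg_reducing_0_iff)
  have eq: "G0 * E1 - G1 * E0 = monom a (d - dF)" using assms(4) cc by blast
  have ccS: "causal_complement F0 F1 a d (E0 - S * G0) (E1 - S * G1)" for S
    unfolding cc eq[symmetric] by (simp add: algebra_simps)
  obtain S where S: "monom 1 M dvd E0 - S * G0" "monom 1 M dvd E1 - S * G1"
      "E0 - S * G0 = 0 \<or> degree (E0 - S * G0) < degree G0 + M"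
    using reduced_solution_exists[OF assms(5)[folded G0_def] assms(3) eq] by blast
  have unique: "R0 = E0 - S * G0 \<and> R1 = E1 - S * G1"
    if "causal_complement F0 F1 a d R0 R1" and "deg_reducing M 0 F0 F1 R0 R1" for R0 R1
  proof (rule reduced_solution_unique[OF cop assms(5)[folded G0_def]])
    show "G0 * R1 - G1 * R0 = G0 * (E1 - S * G1) - G1 * (E0 - S * G0)"
      using that(1) ccS[of S] unfolding cc by simp
  qed (use that(2) S in \<open>auto simp: dr\<close>)
  show ?thesis unfolding G0_def[symmetric] G1_def[symmetric]
  proof (intro exI[of _ S] conjI allI impI)
    show "causal_complement F0 F1 a d (E0 - S * G0) (E1 - S * G1)" by (rule ccS)
    show "deg_reducing M 0 F0 F1 (E0 - S * G0) (E1 - S * G1)" using S by (simp add: dr)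
  next
    fix S' assume "causal_complement F0 F1 a d (E0 - S' * G0) (E1 - S' * G1) \<and>
                   deg_reducing M 0 F0 F1 (E0 - S' * G0) (E1 - S' * G1)"
    then have "E0 - S' * G0 = E0 - S * G0" using unique by blast
    then show "S' = S" using \<open>G0 \<noteq> 0\<close> by simp
  qed (use unique in auto)
qed

theorem theorem2p6:
  fixes a :: complex and d dF M l :: nat and F0 F1 E0 E1 :: "complex poly"
  assumes "a \<noteq> 0"
    and "F0 \<noteq> 0 \<or> F1 \<noteq> 0"
    and "gcd F0 F1 = monom 1 dF" and "dF \<le> d"
    and "M \<le> d - dF"
    and "causal_complement F0 F1 a d E0 E1"
    and "l \<in> {0, 1}"
    and "left_justified ((if l = 0 then F0 else F1) div monom 1 dF)"
  shows "\<exists>S. causal_complement F0 F1 a d (E0 - S * (F0 div monom 1 dF)) (E1 - S * (F1 div monom 1 dF))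
            \<and> deg_reducing M l F0 F1 (E0 - S * (F0 div monom 1 dF)) (E1 - S * (F1 div monom 1 dF))
            \<and> (\<forall>S'. causal_complement F0 F1 a d (E0 - S' * (F0 div monom 1 dF)) (E1 - S' * (F1 div monom 1 dF))
                   \<and> deg_reducing M l F0 F1 (E0 - S' * (F0 div monom 1 dF)) (E1 - S' * (F1 div monom 1 dF))
                   \<longrightarrow> S' = S)
            \<and> (\<forall>R0 R1. causal_complement F0 F1 a d R0 R1 \<and> deg_reducing M l F0 F1 R0 R1
                   \<longrightarrow> R0 = E0 - S * (F0 div monom 1 dF) \<and> R1 = E1 - S * (F1 div monom 1 dF))"
proof (cases "l = 0")
  case True
  then show ?thesis using reduced_complement_exists_unique assms(3-6,8) by simp
next
  case False
  then have "l = 1" using assms(7) by simp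
  have "causal_complement F1 F0 (- a) d E1 E0"
    using assms(6) by (simp add: causal_complement_swap)
  from reduced_complement_exists_unique[OF _ assms(4,5) this] assms(3,8) \<open>l = 1\<close>
  show ?thesis unfolding \<open>l = 1\<close> deg_reducing_swap
    by (simp add: gcd.commute causal_complement_swap) blast
qed

end
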